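(* Assume (A1), (A2') and (F1), and let $\lambda>0$. If $(u,v)\in W_\lambda\setminus\{(0,0)\}$ satisfies $\langle J'_\lambda(u,v),(u,v)\rangle\le0$, then there exists a unique $t_0\in(0,1]$ such that $t_0(u,v)\in\mathcal N_\lambda$.
   Context: Let $V=\mathbb{Z}^N$ be the integer lattice graph ($x\sim y$ iff $\sum_i|x_i-y_i|=1$), $\int_Vu\,d\mu=\sum_{x\in V}u(x)$. Fix $\alpha\in(0,N)$, $p\ge2$, $\gamma>\frac{(N+\alpha)p}{2N}$. $|\nabla u|^p(x)=\frac12\sum_{y\sim x}|u(y)-u(x)|^p$. $R_\alpha(x,y)=\frac{1}{|\Gamma(-\alpha)|}\int_0^\infty k_t(x,y)t^{\alpha-1}dt$ with $k_t$ the heat kernel of the discrete Laplacian $\Delta u(x)=\sum_{y\sim x}(u(y)-u(x))$; $(R_\alpha*f)(x)=\sum_yR_\alpha(x,y)f(y)$. (A1) $a,b:V\to[0,\infty)$ and $\Omega_a=\{a=0\}$, $\Omega_b=\{b=0\}$, $\Omega_a\cap\Omega_b$ are non-empty bounded domains; (A2') there exist $M_1,M_2>0$ with $\{a\le M_1\}$, $\{b\le M_2\}$ finite and non-empty; (F1) $F\in C^1(\mathbb{R}^2,[0,\infty))$, $F(tu,tv)=t^\gamma F(u,v)$ for $t>0$. $W^{1,p}(\mathbb{Z}^N)$: completion of finitely supported functions under $(\int_V(|\nabla u|^p+|u|^p))^{1/p}$. $W_{\lambda,h}=\{u\in W^{1,p}:\int_V(\lambda h+1)|u|^p<\infty\}$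 with $\|u\|_{\lambda,h}=(\int_V(|\nabla u|^p+(\lambda h+1)|u|^p))^{1/p}$; $W_\lambda=W_{\lambda,a}\times W_{\lambda,b}$, $\|(u,v)\|_\lambda=(\|u\|_{\lambda,a}^p+\|v\|_{\lambda,b}^p)^{1/p}$. $J_\lambda(u,v)=\frac1p\|(u,v)\|_\lambda^p-\frac1{2\gamma}\int_V(R_\alpha*F(u,v))F(u,v)d\mu$ with $\langle J'_\lambda(u,v),(u,v)\rangle=\|(u,v)\|_\lambda^p-\int_V(R_\alpha*F(u,v))F(u,v)d\mu$. $\mathcal N_\lambda=\{(u,v)\in W_\lambda\setminus\{(0,0)\}:\langle J'_\lambda(u,v),(u,v)\rangle=0\}$. *)

theory Defs
  imports "HOL-Analysis.Analysis"
begin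

type_synonym 'n vert = "int ^ 'n"

definition adj :: "'n::finite vert \<Rightarrow> 'n vert \<Rightarrow> bool" where
  "adj x y \<longleftrightarrow> (\<Sum>i\<in>UNIV. \<bar>x $ i - y $ i\<bar>) = 1"

definition connected_set :: "'n::finite vert set \<Rightarrow> bool" where
  "connected_set S \<longleftrightarrow> (\<forall>x\<in>S. \<forall>y\<in>S.
      (\<lambda>u w. u \<in> S \<and> w \<in> S \<and> adj u w)\<^sup>*\<^sup>* x y)"

text \<open>A bounded domain: nonempty, bounded (= finite in Z^N) and connected.\<close>
definition bounded_domain :: "'n::finite vert set \<Rightarrow> bool" where
  "bounded_domain S \<longleftrightarrow> S \<noteq> {} \<and> finite S \<and> connected_set S"

definition lap :: "('n::finite vert \<Rightarrow> real) \<Rightarrow> 'n vert \<Rightarrow> real" where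
  "lap f x = (\<Sum>y\<in>{y. adj x y}. f y - f x)"

definition heat_kernel :: "real \<Rightarrow> 'n::finite vert \<Rightarrow> 'n vert \<Rightarrow> real" where
  "heat_kernel t x y =
     (\<Sum>n. t ^ n / fact n * ((lap ^^ n) (\<lambda>z. if z = y then 1 else 0)) x)"

definition R_alpha :: "real \<Rightarrow> 'n::finite vert \<Rightarrow> 'n vert \<Rightarrow> real" where
  "R_alpha \<alpha> x y = 1 / \<bar>Gamma (- \<alpha>)\<bar> *
     (LBINT t:{0<..}. heat_kernel t x y * t powr (\<alpha> - 1))"

definition riesz_conv :: "real \<Rightarrow> ('n::finite vert \<Rightarrow> real) \<Rightarrow> 'n vert \<Rightarrow> real" where
  "riesz_conv \<alpha> f x = (\<Sum>\<^sub>\<infinity>y. R_alpha \<alpha> x y * f y)"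

definition grad_p :: "real \<Rightarrow> ('n::finite vert \<Rightarrow> real) \<Rightarrow> 'n vert \<Rightarrow> real" where
  "grad_p p u x = 1/2 * (\<Sum>y\<in>{y. adj x y}. \<bar>u y - u x\<bar> powr p)"

definition w1p_norm :: "real \<Rightarrow> ('n::finite vert \<Rightarrow> real) \<Rightarrow> real" where
  "w1p_norm p u = (\<Sum>\<^sub>\<infinity>x. grad_p p u x + \<bar>u x\<bar> powr p) powr (1 / p)"

text \<open>W^{1,p}: completion (realised as closure in the space of functions of finite
  norm) of the finitely supported functions.\<close>
definition W1p :: "real \<Rightarrow> ('n::finite vert \<Rightarrow> real) set" where
  "W1p p = {u. (\<lambda>x. grad_p p u x + \<bar>u x\<bar> powr p) summable_on UNIV \<and>
     (\<exists>\<phi>::nat \<Rightarrow> 'n vert \<Rightarrow> real. (\<forall>k. finite {x. \<phi> k x \<noteq> 0}) \<and>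
        (\<lambda>k. w1p_norm p (\<lambda>x. \<phi> k x - u x)) \<longlonglongrightarrow> 0)}"

definition W_lh :: "real \<Rightarrow> real \<Rightarrow> ('n::finite vert \<Rightarrow> real) \<Rightarrow> ('n vert \<Rightarrow> real) set" where
  "W_lh p lam h = {u \<in> W1p p. (\<lambda>x. (lam * h x + 1) * \<bar>u x\<bar> powr p) summable_on UNIV}"

definition norm_lh :: "real \<Rightarrow> real \<Rightarrow> ('n::finite vert \<Rightarrow> real) \<Rightarrow> ('n vert \<Rightarrow> real) \<Rightarrow> real" where
  "norm_lh p lam h u =
     (\<Sum>\<^sub>\<infinity>x. grad_p p u x + (lam * h x + 1) * \<bar>u x\<bar> powr p) powr (1 / p)"

definition W_lambda :: "real \<Rightarrow> real \<Rightarrow> ('n::finite vert \<Rightarrow> real) \<Rightarrow> ('n vert \<Rightarrow> real)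
    \<Rightarrow> (('n vert \<Rightarrow> real) \<times> ('n vert \<Rightarrow> real)) set" where
  "W_lambda p lam a b = W_lh p lam a \<times> W_lh p lam b"

definition norm_lambda :: "real \<Rightarrow> real \<Rightarrow> ('n::finite vert \<Rightarrow> real) \<Rightarrow> ('n vert \<Rightarrow> real)
    \<Rightarrow> ('n vert \<Rightarrow> real) \<Rightarrow> ('n vert \<Rightarrow> real) \<Rightarrow> real" where
  "norm_lambda p lam a b u v =
     ((norm_lh p lam a u) powr p + (norm_lh p lam b v) powr p) powr (1 / p)"

definition choquard_term :: "real \<Rightarrow> (real \<Rightarrow> real \<Rightarrow> real) \<Rightarrow> ('n::finite vert \<Rightarrow> real)
    \<Rightarrow> ('n vert \<Rightarrow> real) \<Rightarrow> real" where
  "choquard_term \<alpha> F u v =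
     (\<Sum>\<^sub>\<infinity>x. riesz_conv \<alpha> (\<lambda>y. F (u y) (v y)) x * F (u x) (v x))"

definition J_lambda :: "real \<Rightarrow> real \<Rightarrow> real \<Rightarrow> real \<Rightarrow> (real \<Rightarrow> real \<Rightarrow> real)
    \<Rightarrow> ('n::finite vert \<Rightarrow> real) \<Rightarrow> ('n vert \<Rightarrow> real)
    \<Rightarrow> ('n vert \<Rightarrow> real) \<Rightarrow> ('n vert \<Rightarrow> real) \<Rightarrow> real" where
  "J_lambda p \<alpha> \<gamma> lam F a b u v =
     1 / p * (norm_lambda p lam a b u v) powr p - 1 / (2 * \<gamma>) * choquard_term \<alpha> F u v"

text \<open>\<langle>J'_\<lambda>(u,v),(u,v)\<rangle>, as given in the paper.\<close>
definition J_deriv_pair :: "real \<Rightarrow> real \<Rightarrow> real \<Rightarrow> (real \<Rightarrow> real \<Rightarrow> real)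
    \<Rightarrow> ('n::finite vert \<Rightarrow> real) \<Rightarrow> ('n vert \<Rightarrow> real)
    \<Rightarrow> ('n vert \<Rightarrow> real) \<Rightarrow> ('n vert \<Rightarrow> real) \<Rightarrow> real" where
  "J_deriv_pair p \<alpha> lam F a b u v =
     (norm_lambda p lam a b u v) powr p - choquard_term \<alpha> F u v"

definition nehari :: "real \<Rightarrow> real \<Rightarrow> real \<Rightarrow> (real \<Rightarrow> real \<Rightarrow> real)
    \<Rightarrow> ('n::finite vert \<Rightarrow> real) \<Rightarrow> ('n vert \<Rightarrow> real)
    \<Rightarrow> (('n vert \<Rightarrow> real) \<times> ('n vert \<Rightarrow> real)) set" where
  "nehari p \<alpha> lam F a b = {(u, v). (u, v) \<in> W_lambda p lam a b \<and> (u, v) \<noteq> ((\<lambda>_. 0), (\<lambda>_. 0)) \<and>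
       J_deriv_pair p \<alpha> lam F a b u v = 0}"

definition hypA1 :: "('n::finite vert \<Rightarrow> real) \<Rightarrow> ('n vert \<Rightarrow> real) \<Rightarrow> bool" where
  "hypA1 a b \<longleftrightarrow> (\<forall>x. a x \<ge> 0 \<and> b x \<ge> 0) \<and>
     bounded_domain {x. a x = 0} \<and> bounded_domain {x. b x = 0} \<and>
     bounded_domain ({x. a x = 0} \<inter> {x. b x = 0})"

definition hypA2' :: "('n::finite vert \<Rightarrow> real) \<Rightarrow> ('n vert \<Rightarrow> real) \<Rightarrow> bool" where
  "hypA2' a b \<longleftrightarrow> (\<exists>M1 M2. M1 > 0 \<and> M2 > 0 \<and>
     finite {x. a x \<le> M1} \<and> {x. a x \<le> M1} \<noteq> {} \<and>
     finite {x. b x \<le> M2} \<and> {x. b x \<le> M2} \<noteq> {})"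

definition hypF1 :: "real \<Rightarrow> (real \<Rightarrow> real \<Rightarrow> real) \<Rightarrow> bool" where
  "hypF1 \<gamma> F \<longleftrightarrow> (\<forall>u v. F u v \<ge> 0) \<and>
     (\<exists>F'. (\<forall>z. ((\<lambda>(u, v). F u v) has_derivative blinfun_apply (F' z)) (at z)) \<and>
           continuous_on UNIV F') \<and>
     (\<forall>t u v. t > 0 \<longrightarrow> F (t * u) (t * v) = t powr \<gamma> * F u v)"

end

theory Submission
  imports Defs
begin

text \<open>Both terms of \<open>\<langle>J'\<^sub>\<lambda>(u,v),(u,v)\<rangle>\<close> are homogeneous along the ray \<open>t(u,v)\<close>:
  the norm term scales like \<open>t\<^sup>p\<close> and, by the \<open>\<gamma>\<close>-homogeneity of \<open>F\<close>, the nonlocal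
  term like \<open>t\<^sup>2\<^sup>\<gamma>\<close>. So \<open>t(u,v) \<in> \<N>\<^sub>\<lambda>\<close> iff \<open>t\<^sup>p A = t\<^sup>2\<^sup>\<gamma> B\<close> with
  \<open>A = \<parallel>(u,v)\<parallel>\<^sub>\<lambda>\<^sup>p > 0\<close> and \<open>B\<close> the nonlocal term, i.e. iff \<open>t\<^sup>2\<^sup>\<gamma>\<^sup>-\<^sup>p = A/B\<close>.
  The hypotheses give \<open>A \<le> B\<close> and \<open>2\<gamma> > p\<close>, so this has exactly one solution,
  and it lies in \<open>(0,1]\<close>.\<close>

lemma ex1_zero_powr_diff:
  fixes A B p q :: real
  assumes "0 < A" "A \<le> B" "p < q"
  shows "\<exists>!t. t \<in> {0<..1} \<and> t powr p * A - t powr q * B = 0"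
proof -
  define d where "d = q - p"
  have "0 < d" "0 < B" "0 < A / B" "A / B \<le> 1"
    using assms by (auto simp: d_def)
  have zero_iff: "t powr p * A - t powr q * B = 0 \<longleftrightarrow> t powr d = A / B" if "0 < t" for t
  proof -
    have "t powr q = t powr p * t powr d" by (simp add: d_def flip: powr_add)
    with that \<open>0 < B\<close> show ?thesis by (auto simp: field_simps)
  qed
  have root: "t = (A / B) powr (1 / d)" if "0 < t" "t powr d = A / B" for t
  proof -
    have "t = (t powr d) powr (1 / d)"
      using that(1) \<open>0 < d\<close> by (simp add: powr_powr)
    with that(2) show ?thesis by simp
  qed
  define t0 where "t0 = (A / B) powr (1 / d)"
  have "t0 \<in> {0<..1}"
    using \<open>0 < A / B\<close> \<open>A / B \<le> 1\<close> \<open>0 < d\<close> by (auto simp: t0_def intro: powr_le1)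
  moreover have "t0 powr d = A / B"
    using assms(1) \<open>0 < B\<close> \<open>0 < d\<close> by (simp add: t0_def powr_powr)
  ultimately show ?thesis
    using zero_iff root by (intro ex1I[of _ t0]) (auto simp: t0_def)
qed

lemma powr_mult_powr_inverse:
  fixes t x p :: real
  assumes "p \<noteq> 0"
  shows "(\<bar>t\<bar> powr p * x) powr (1 / p) = \<bar>t\<bar> * x powr (1 / p)"
  using assms by (simp add: powr_mult powr_powr)

lemma grad_p_scale: "grad_p p (\<lambda>x. t * u x) x = \<bar>t\<bar> powr p * grad_p p u x"
proof -
  have "\<bar>t * u y - t * u x\<bar> powr p = \<bar>t\<bar> powr p * \<bar>u y - u x\<bar> powr p" for y
    by (simp add: abs_mult powr_mult flip: right_diff_distrib)
  then show ?thesis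
    unfolding grad_p_def by (simp add: sum_distrib_left)
qed

lemma grad_p_nonneg: "0 \<le> grad_p p u x"
  unfolding grad_p_def by (simp add: sum_nonneg)

lemma w1p_norm_scale:
  assumes "p \<noteq> 0"
  shows "w1p_norm p (\<lambda>x. t * u x) = \<bar>t\<bar> * w1p_norm p u"
proof -
  have "(\<lambda>x. grad_p p (\<lambda>x. t * u x) x + \<bar>t * u x\<bar> powr p)
      = (\<lambda>x. \<bar>t\<bar> powr p * (grad_p p u x + \<bar>u x\<bar> powr p))"
    by (simp add: grad_p_scale abs_mult powr_mult distrib_left)
  then show ?thesis
    using assms by (simp add: w1p_norm_def infsum_cmult_right' powr_mult_powr_inverse)
qed

lemma norm_lh_scale:
  assumes "p \<noteq> 0"
  shows "norm_lh p lam h (\<lambda>x. t * u x) = \<bar>t\<bar> * norm_lh p lam h u"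
proof -
  have "(\<lambda>x. grad_p p (\<lambda>x. t * u x) x + (lam * h x + 1) * \<bar>t * u x\<bar> powr p)
      = (\<lambda>x. \<bar>t\<bar> powr p * (grad_p p u x + (lam * h x + 1) * \<bar>u x\<bar> powr p))"
    by (simp add: grad_p_scale abs_mult powr_mult algebra_simps)
  then show ?thesis
    using assms by (simp add: norm_lh_def infsum_cmult_right' powr_mult_powr_inverse)
qed

lemma norm_lambda_scale:
  assumes "p \<noteq> 0"
  shows "norm_lambda p lam a b (\<lambda>x. t * u x) (\<lambda>x. t * v x) = \<bar>t\<bar> * norm_lambda p lam a b u v"
  using assms
  by (simp add: norm_lambda_def norm_lh_scale powr_mult distrib_left
      flip: powr_mult_powr_inverse)

lemma W1p_scale:
  assumes "p \<noteq> 0" "u \<in> W1p p"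
  shows "(\<lambda>x. t * u x) \<in> W1p p"
proof -
  obtain \<phi> :: "nat \<Rightarrow> _" where fin: "\<forall>k. finite {x. \<phi> k x \<noteq> 0}"
    and approx: "(\<lambda>k. w1p_norm p (\<lambda>x. \<phi> k x - u x)) \<longlonglongrightarrow> 0"
    and summ: "(\<lambda>x. grad_p p u x + \<bar>u x\<bar> powr p) summable_on UNIV"
    using assms(2) unfolding W1p_def by blast
  have "(\<lambda>x. grad_p p (\<lambda>x. t * u x) x + \<bar>t * u x\<bar> powr p)
      = (\<lambda>x. \<bar>t\<bar> powr p * (grad_p p u x + \<bar>u x\<bar> powr p))"
    by (simp add: grad_p_scale abs_mult powr_mult distrib_left)
  with summ have "(\<lambda>x. grad_p p (\<lambda>x. t * u x) x + \<bar>t * u x\<bar> powr p) summable_on UNIV"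
    by (simp add: summable_on_cmult_right)
  moreover have "\<forall>k. finite {x. t * \<phi> k x \<noteq> 0}"
    using fin by (simp add: finite_subset[of _ "{x. \<phi> _ x \<noteq> 0}"])
  moreover have "(\<lambda>k. w1p_norm p (\<lambda>x. t * \<phi> k x - t * u x)) \<longlonglongrightarrow> 0"
    using tendsto_mult_right_zero[OF approx, of "\<bar>t\<bar>"] assms(1)
    by (simp add: w1p_norm_scale flip: right_diff_distrib)
  ultimately show ?thesis
    unfolding W1p_def by (auto intro!: exI[of _ "\<lambda>k x. t * \<phi> k x"])
qed

lemma W_lh_scale:
  assumes "p \<noteq> 0" "u \<in> W_lh p lam h"
  shows "(\<lambda>x. t * u x) \<in> W_lh p lam h"
proof -
  have "(\<lambda>x. (lam * h x + 1) * \<bar>t * u x\<bar> powr p)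
      = (\<lambda>x. \<bar>t\<bar> powr p * ((lam * h x + 1) * \<bar>u x\<bar> powr p))"
    by (simp add: abs_mult powr_mult mult.left_commute)
  then show ?thesis
    using assms W1p_scale[OF assms(1)] unfolding W_lh_def by (auto intro: summable_on_cmult_right)
qed

lemma W_lambda_scale:
  assumes "p \<noteq> 0" "(u, v) \<in> W_lambda p lam a b"
  shows "((\<lambda>x. t * u x), (\<lambda>x. t * v x)) \<in> W_lambda p lam a b"
  using assms W_lh_scale[OF assms(1)] unfolding W_lambda_def by auto

lemma norm_lh_pos:
  assumes "0 \<le> lam" "\<And>x. 0 \<le> h x" "u \<in> W_lh p lam h" "u x0 \<noteq> 0"
  shows "0 < norm_lh p lam h u"
proof -
  let ?f = "\<lambda>x. grad_p p u x + (lam * h x + 1) * \<bar>u x\<bar> powr p"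
  have summ_W1p: "(\<lambda>x. grad_p p u x + \<bar>u x\<bar> powr p) summable_on UNIV"
    and summ_weight: "(\<lambda>x. (lam * h x + 1) * \<bar>u x\<bar> powr p) summable_on UNIV"
    using assms(3) unfolding W_lh_def W1p_def by auto
  have "(\<lambda>x. grad_p p u x) summable_on UNIV"
    by (rule summable_on_comparison_test[OF summ_W1p]) (auto simp: grad_p_nonneg)
  then have summ: "?f summable_on UNIV"
    using summ_weight by (rule summable_on_add)
  have nonneg: "0 \<le> ?f x" for x
    using assms(1,2) by (simp add: grad_p_nonneg)
  have "0 < ?f x0"
    using assms grad_p_nonneg[of p u x0] by (simp add: add_nonneg_pos add_pos_nonneg)
  also have "?f x0 = infsum ?f {x0}"
    by simp
  also have "\<dots> \<le> infsum ?f UNIV"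
    using summ nonneg by (intro infsum_mono2) auto
  finally show ?thesis
    by (simp add: norm_lh_def)
qed

lemma norm_lambda_pos:
  assumes "0 \<le> lam" "\<And>x. 0 \<le> a x" "\<And>x. 0 \<le> b x"
    and "(u, v) \<in> W_lambda p lam a b" "(u, v) \<noteq> ((\<lambda>_. 0), (\<lambda>_. 0))"
  shows "0 < norm_lambda p lam a b u v"
proof -
  obtain x0 where "u x0 \<noteq> 0 \<or> v x0 \<noteq> 0"
    using assms(5) by fastforce
  then have "0 < norm_lh p lam a u \<or> 0 < norm_lh p lam b v"
    using assms norm_lh_pos unfolding W_lambda_def by blast
  then have "0 < norm_lh p lam a u powr p + norm_lh p lam b v powr p"
    by (metis add_pos_nonneg add_nonneg_pos powr_gt_zero powr_ge_zero less_irrefl)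
  then show ?thesis
    by (simp add: norm_lambda_def)
qed

lemma choquard_term_scale:
  assumes "\<And>x y. F (t * x) (t * y) = t powr \<gamma> * F x y"
  shows "choquard_term \<alpha> F (\<lambda>x. t * u x) (\<lambda>x. t * v x)
       = t powr (2 * \<gamma>) * choquard_term \<alpha> F u v"
proof -
  have "riesz_conv \<alpha> (\<lambda>y. t powr \<gamma> * F (u y) (v y)) x
      = t powr \<gamma> * riesz_conv \<alpha> (\<lambda>y. F (u y) (v y)) x" for x
    unfolding riesz_conv_def by (simp add: algebra_simps flip: infsum_cmult_right')
  moreover have "t powr (2 * \<gamma>) = t powr \<gamma> * t powr \<gamma>"
    by (simp flip: powr_add)
  ultimately show ?thesis
    unfolding choquard_term_def assms by (simp add: algebra_simps flip: infsum_cmult_right')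
qed

lemma J_deriv_pair_scale:
  assumes "0 < t" "p \<noteq> 0" "hypF1 \<gamma> F"
  shows "J_deriv_pair p \<alpha> lam F a b (\<lambda>x. t * u x) (\<lambda>x. t * v x)
       = t powr p * norm_lambda p lam a b u v powr p - t powr (2 * \<gamma>) * choquard_term \<alpha> F u v"
proof -
  have "F (t * x) (t * y) = t powr \<gamma> * F x y" for x y
    using assms(1,3) unfolding hypF1_def by blast
  then show ?thesis
    using assms(1,2)
    by (simp add: J_deriv_pair_def norm_lambda_scale choquard_term_scale powr_mult)
qed

lemma nehari_scale_iff:
  assumes "t \<noteq> 0" "p \<noteq> 0"
    and "(u, v) \<in> W_lambda p lam a b" "(u, v) \<noteq> ((\<lambda>_. 0), (\<lambda>_. 0))"
  shows "((\<lambda>x. t * u x), (\<lambda>x. t * v x)) \<in> nehari p \<alpha> lam F a b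
     \<longleftrightarrow> J_deriv_pair p \<alpha> lam F a b (\<lambda>x. t * u x) (\<lambda>x. t * v x) = 0"
proof -
  have "((\<lambda>x. t * u x), (\<lambda>x. t * v x)) \<noteq> ((\<lambda>_. 0), (\<lambda>_. 0))"
    using assms(1,4) by (auto simp: fun_eq_iff)
  then show ?thesis
    using W_lambda_scale[OF assms(2,3)] unfolding nehari_def by simp
qed

theorem lemma2p8:
  fixes a b :: "int ^ 'n::finite \<Rightarrow> real"
    and F :: "real \<Rightarrow> real \<Rightarrow> real"
    and p \<alpha> \<gamma> lam :: real
    and u v :: "int ^ 'n \<Rightarrow> real"
  assumes "0 < \<alpha>" "\<alpha> < real CARD('n)"
    and "p \<ge> 2"
    and "\<gamma> > (real CARD('n) + \<alpha>) * p / (2 * real CARD('n))"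
    and "hypA1 a b" and "hypA2' a b" and "hypF1 \<gamma> F"
    and "lam > 0"
    and "(u, v) \<in> W_lambda p lam a b" and "(u, v) \<noteq> ((\<lambda>_. 0), (\<lambda>_. 0))"
    and "J_deriv_pair p \<alpha> lam F a b u v \<le> 0"
  shows "\<exists>!t0. t0 \<in> {0<..1} \<and>
           ((\<lambda>x. t0 * u x), (\<lambda>x. t0 * v x)) \<in> nehari p \<alpha> lam F a b"
proof -
  define A where "A = norm_lambda p lam a b u v powr p"
  define B where "B = choquard_term \<alpha> F u v"
  have "0 < A"
    using assms(5,8-10) norm_lambda_pos[of lam a b u v p] by (simp add: A_def hypA1_def)
  moreover have "A \<le> B"
    using assms(11) by (simp add: J_deriv_pair_def A_def B_def)
  moreover have "p < 2 * \<gamma>"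
  proof -
    have "p / 2 < (real CARD('n) + \<alpha>) * p / (2 * real CARD('n))"
      using assms(1,3) by (simp add: field_simps)
    with assms(4) show ?thesis by linarith
  qed
  ultimately have "\<exists>!t. t \<in> {0<..1} \<and> t powr p * A - t powr (2 * \<gamma>) * B = 0"
    by (rule ex1_zero_powr_diff)
  moreover have "t \<in> {0<..1} \<and> ((\<lambda>x. t * u x), (\<lambda>x. t * v x)) \<in> nehari p \<alpha> lam F a b
      \<longleftrightarrow> t \<in> {0<..1} \<and> t powr p * A - t powr (2 * \<gamma>) * B = 0" for t
    using assms(3,7,9,10)
    by (auto simp: nehari_scale_iff J_deriv_pair_scale A_def B_def)
  ultimately show ?thesis
    by simp
qed

end
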